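(* Let $G$ be a graph and $f$ a local utility function such that $E[f(\overline{X})]\ge\beta$ when each $X_v$ is drawn independently from a distribution on $A$ depending only on the 1-hop neighbourhood of $v$. Then, given a legal $c$-coloring of $G$, there is a deterministic distributed algorithm in the CONGEST model running in $O(c)$ communication rounds that outputs an assignment $\overline{X}$ with $f(\overline{X})\ge\beta$.
   Context: Variables $X_v\in A$ (a finite set whose elements are encodable in $O(\log n)$ bits) for $v\in V$. $L_v[\overline{X}]$ is the restriction of an assignment to the neighbours of $v$, passed together with the 1-hop neighbourhood of $v$. $f$ is a local utility function if for every $v$ there is $g_v$ with $f(\overline{X}\cup\{X_v=\alpha\})-f(\overline{X}\cup\{X_v=\alpha'\})=g_v(L_v[\overline{X}],\alpha,\alpha')$ for all assignments $\overline{X}$ and $\alpha,\alpha'\in A$. CONGEST: synchronous rounds, $O(\log n)$-bit messages per edge per round. A legal coloring gives adjacent vertices different colors. *)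

theory Defs
  imports "HOL-Probability.Probability"
begin

(* Simple graph on a finite vertex set V \<subseteq> nat (vertex names serve as node IDs):
   E is symmetric, irreflexive and only relates vertices of V. *)
definition simple_graph :: "nat set \<Rightarrow> (nat \<Rightarrow> nat \<Rightarrow> bool) \<Rightarrow> bool" where
  "simple_graph V E \<longleftrightarrow> finite V \<and> (\<forall>u v. E u v \<longrightarrow> u \<in> V \<and> v \<in> V \<and> u \<noteq> v \<and> E v u)"

definition nbrs :: "nat set \<Rightarrow> (nat \<Rightarrow> nat \<Rightarrow> bool) \<Rightarrow> nat \<Rightarrow> nat set" where
  "nbrs V E v = {u \<in> V. E v u}"

definition legal_coloring :: "nat set \<Rightarrow> (nat \<Rightarrow> nat \<Rightarrow> bool) \<Rightarrow> nat \<Rightarrow> (nat \<Rightarrow> nat) \<Rightarrow> bool" where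
  "legal_coloring V E c col \<longleftrightarrow>
     (\<forall>v\<in>V. col v < c) \<and> (\<forall>u\<in>V. \<forall>v\<in>V. E u v \<longrightarrow> col u \<noteq> col v)"

definition assignment :: "nat set \<Rightarrow> 'a set \<Rightarrow> (nat \<Rightarrow> 'a) \<Rightarrow> bool" where
  "assignment V A X \<longleftrightarrow> (\<forall>v\<in>V. X v \<in> A) \<and> (\<forall>v. v \<notin> V \<longrightarrow> X v = undefined)"

definition restr_nbrs :: "nat set \<Rightarrow> (nat \<Rightarrow> nat \<Rightarrow> bool) \<Rightarrow> nat \<Rightarrow> (nat \<Rightarrow> 'a) \<Rightarrow> (nat \<Rightarrow> 'a)" where
  "restr_nbrs V E v X = (\<lambda>u. if u \<in> nbrs V E v then X u else undefined)"

definition local_utility_wrt ::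
  "nat set \<Rightarrow> (nat \<Rightarrow> nat \<Rightarrow> bool) \<Rightarrow> 'a set \<Rightarrow> ((nat \<Rightarrow> 'a) \<Rightarrow> real)
     \<Rightarrow> (nat \<Rightarrow> (nat \<Rightarrow> 'a) \<Rightarrow> 'a \<Rightarrow> 'a \<Rightarrow> real) \<Rightarrow> bool" where
  "local_utility_wrt V E A f g \<longleftrightarrow>
     (\<forall>v\<in>V. \<forall>X. assignment V A X \<longrightarrow> (\<forall>\<alpha>\<in>A. \<forall>\<alpha>'\<in>A.
        f (X(v := \<alpha>)) - f (X(v := \<alpha>')) = g v (restr_nbrs V E v X) \<alpha> \<alpha>'))"

definition local_utility ::
  "nat set \<Rightarrow> (nat \<Rightarrow> nat \<Rightarrow> bool) \<Rightarrow> 'a set \<Rightarrow> ((nat \<Rightarrow> 'a) \<Rightarrow> real) \<Rightarrow> bool" where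
  "local_utility V E A f \<longleftrightarrow> (\<exists>g. local_utility_wrt V E A f g)"

record 'a local_input =
  li_n      :: nat
  li_A      :: "'a set"
  li_enc    :: "'a \<Rightarrow> bool list"
  li_c      :: nat
  li_id     :: nat
  li_color  :: nat
  li_nbrs   :: "nat set"
  li_util   :: "(nat \<Rightarrow> 'a) \<Rightarrow> 'a \<Rightarrow> 'a \<Rightarrow> real"
  li_dists  :: "nat \<Rightarrow> 'a pmf"

(* knowledge after r rounds: initial input and the list of received message vectors
   (round i: sender ID \<mapsto> message; [] for non-neighbours) *)
type_synonym 'a knowledge = "'a local_input \<times> (nat \<Rightarrow> bool list) list"

record 'a congest_alg =
  alg_send :: "'a knowledge \<Rightarrow> nat \<Rightarrow> bool list"
  alg_out  :: "'a knowledge \<Rightarrow> 'a"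

primrec run :: "'a congest_alg \<Rightarrow> (nat \<Rightarrow> nat set) \<Rightarrow> (nat \<Rightarrow> 'a local_input) \<Rightarrow> nat
                 \<Rightarrow> nat \<Rightarrow> 'a knowledge" where
  "run alg N inp 0 = (\<lambda>v. (inp v, []))"
| "run alg N inp (Suc r) =
     (\<lambda>v. (fst (run alg N inp r v),
           snd (run alg N inp r v) @
             [(\<lambda>u. if u \<in> N v then alg_send alg (run alg N inp r u) v else [])]))"

definition node_input ::
  "nat set \<Rightarrow> (nat \<Rightarrow> nat \<Rightarrow> bool) \<Rightarrow> 'a set \<Rightarrow> ('a \<Rightarrow> bool list) \<Rightarrow> nat \<Rightarrow> (nat \<Rightarrow> nat)
    \<Rightarrow> (nat \<Rightarrow> (nat \<Rightarrow> 'a) \<Rightarrow> 'a \<Rightarrow> 'a \<Rightarrow> real) \<Rightarrow> (nat \<Rightarrow> 'a pmf) \<Rightarrow> nat \<Rightarrow> 'a local_input" where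
  "node_input V E A enc c col g p v =
     \<lparr> li_n = card V, li_A = A, li_enc = enc, li_c = c, li_id = v, li_color = col v,
       li_nbrs = nbrs V E v, li_util = g v,
       li_dists = (\<lambda>u. if u \<in> insert v (nbrs V E v) then p u else return_pmf undefined) \<rparr>"

definition congest_bounded ::
  "real \<Rightarrow> nat \<Rightarrow> 'a congest_alg \<Rightarrow> nat set \<Rightarrow> (nat \<Rightarrow> nat set) \<Rightarrow> (nat \<Rightarrow> 'a local_input) \<Rightarrow> bool" where
  "congest_bounded B R alg V N inp \<longleftrightarrow>
     (\<forall>r<R. \<forall>v\<in>V. \<forall>u\<in>N v.
        real (length (alg_send alg (run alg N inp r v) u)) \<le> B * log 2 (real (card V)))"

definition alg_output ::
  "'a congest_alg \<Rightarrow> nat set \<Rightarrow> (nat \<Rightarrow> nat set) \<Rightarrow> (nat \<Rightarrow> 'a local_input) \<Rightarrow> nat \<Rightarrow> (nat \<Rightarrow> 'a)" where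
  "alg_output alg V N inp R = (\<lambda>v. if v \<in> V then alg_out alg (run alg N inp R v) else undefined)"

end

theory Submission
  imports Defs
begin

text \<open>
  The method of conditional expectations, run colour class by colour class. Replacing the
  random variable \<open>X\<^sub>v\<close> by a value maximising the conditional expectation of \<open>f\<close> never
  decreases the expectation, and by locality of \<open>f\<close> the gain of one value over another only
  depends on the distribution of the neighbours of \<open>v\<close>. Vertices of one colour are pairwise
  non-adjacent, so in round \<open>i\<close> every vertex of colour \<open>i\<close> can make this choice knowing
  only the values announced by its neighbours of smaller colour; after \<open>c\<close> rounds all
  variables are fixed and the resulting assignment has utility at least \<open>E[f] \<ge> \<beta>\<close>.
\<close>

lemma finite_set_Pi_pmf:
  assumes "finite I" "\<And>i. i \<in> I \<Longrightarrow> finite (set_pmf (q i))"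
  shows "finite (set_pmf (Pi_pmf I d q))"
  using assms by (auto simp: set_Pi_pmf)

lemma expectation_Pi_pmf_insert:
  fixes f :: "('i \<Rightarrow> 'a) \<Rightarrow> real"
  assumes "finite I" "i \<notin> I" "finite A" "set_pmf (q i) \<subseteq> A"
    and "\<And>j. j \<in> I \<Longrightarrow> finite (set_pmf (q j))"
  shows "measure_pmf.expectation (Pi_pmf (insert i I) d q) f
       = (\<Sum>a\<in>A. pmf (q i) a * measure_pmf.expectation (Pi_pmf I d q) (\<lambda>X. f (X(i := a))))"
proof -
  have "Pi_pmf (insert i I) d q = q i \<bind> (\<lambda>a. map_pmf (\<lambda>X. X(i := a)) (Pi_pmf I d q))"
    using Pi_pmf_insert'[OF assms(1,2)] by (simp add: map_pmf_def)
  then show ?thesis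
    using assms finite_set_Pi_pmf[of I q d] by (simp add: pmf_expectation_bind[of A])
qed

lemma expectation_Pi_pmf_fix_argmax:
  fixes f :: "('i \<Rightarrow> 'a) \<Rightarrow> real"
  assumes I: "finite I" "i \<in> I" and A: "finite A" "\<And>j. j \<in> I \<Longrightarrow> set_pmf (q j) \<subseteq> A" "a \<in> A"
    and argmax: "\<And>b. b \<in> A \<Longrightarrow>
          measure_pmf.expectation (Pi_pmf (I - {i}) d q) (\<lambda>X. f (X(i := b)))
        \<le> measure_pmf.expectation (Pi_pmf (I - {i}) d q) (\<lambda>X. f (X(i := a)))"
  shows "measure_pmf.expectation (Pi_pmf I d q) f
       \<le> measure_pmf.expectation (Pi_pmf I d (q(i := return_pmf a))) f"
proof -
  define h where "h b = measure_pmf.expectation (Pi_pmf (I - {i}) d q) (\<lambda>X. f (X(i := b)))" for b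
  have expectation_eq: "measure_pmf.expectation (Pi_pmf I d q') f = (\<Sum>b\<in>A. pmf (q' i) b * h b)"
    if "\<And>j. j \<in> I - {i} \<Longrightarrow> q' j = q j" "set_pmf (q' i) \<subseteq> A" for q'
  proof -
    have "Pi_pmf (I - {i}) d q' = Pi_pmf (I - {i}) d q"
      using that by (intro Pi_pmf_cong) auto
    moreover have "\<And>j. j \<in> I - {i} \<Longrightarrow> finite (set_pmf (q' j))"
      using that(1) A(1,2) by (metis DiffD1 finite_subset)
    ultimately show ?thesis
      using expectation_Pi_pmf_insert[of "I - {i}" i A q' d f] I A that(2)
      by (simp add: insert_absorb h_def)
  qed
  have "measure_pmf.expectation (Pi_pmf I d q) f = (\<Sum>b\<in>A. pmf (q i) b * h b)"
    using I A by (intro expectation_eq) auto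
  also have "\<dots> \<le> (\<Sum>b\<in>A. pmf (q i) b * h a)"
    by (intro sum_mono mult_left_mono) (auto simp: h_def argmax)
  also have "\<dots> = h a"
    using sum_pmf_eq_1[OF A(1), of "q i"] I A by (simp add: sum_distrib_right[symmetric])
  also have "\<dots> = (\<Sum>b\<in>A. pmf (return_pmf a) b * h b)"
    using A by (simp add: indicator_def if_distrib sum.delta cong: if_cong)
  also have "\<dots> = measure_pmf.expectation (Pi_pmf I d (q(i := return_pmf a))) f"
    using expectation_eq[of "q(i := return_pmf a)"] A by simp
  finally show ?thesis .
qed

lemma local_utility_expected_gain:
  assumes G: "simple_graph V E" and lu: "local_utility_wrt V E A f g" and v: "v \<in> V"
    and A: "finite A" "\<And>u. u \<in> V \<Longrightarrow> set_pmf (q u) \<subseteq> A" "a \<in> A" "b \<in> A"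
  shows "measure_pmf.expectation (Pi_pmf (V - {v}) undefined q) (\<lambda>X. f (X(v := b)))
       - measure_pmf.expectation (Pi_pmf (V - {v}) undefined q) (\<lambda>X. f (X(v := a)))
       = measure_pmf.expectation (Pi_pmf (nbrs V E v) undefined q) (\<lambda>L. g v L b a)"
proof -
  define P where "P = Pi_pmf (V - {v}) undefined q"
  have V: "finite V" and loopfree: "v \<notin> nbrs V E v" and nbrs_sub: "nbrs V E v \<subseteq> V - {v}"
    using G by (auto simp: simple_graph_def nbrs_def)
  have set_P: "set_pmf P = PiE_dflt (V - {v}) undefined (set_pmf \<circ> q)"
    using V by (simp add: P_def set_Pi_pmf)
  have "finite (set_pmf P)"
    unfolding P_def using V A by (intro finite_set_Pi_pmf) (auto intro: finite_subset)
  then have "measure_pmf.expectation P (\<lambda>X. f (X(v := b))) - measure_pmf.expectation P (\<lambda>X. f (X(v := a)))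
      = measure_pmf.expectation P (\<lambda>X. f (X(v := b)) - f (X(v := a)))"
    by (simp add: integrable_measure_pmf_finite)
  also have "\<dots> = measure_pmf.expectation P (\<lambda>X. g v (restr_nbrs V E v X) b a)"
  proof (intro integral_cong_AE AE_pmfI)
    fix X assume "X \<in> set_pmf P"
    then have "assignment V A (X(v := a))"
      using A set_P v unfolding assignment_def PiE_dflt_def by auto
    then have "f (X(v := b)) - f (X(v := a)) = g v (restr_nbrs V E v (X(v := a))) b a"
      using lu v A unfolding local_utility_wrt_def by (metis fun_upd_idem_iff fun_upd_upd fun_upd_same)
    also have "restr_nbrs V E v (X(v := a)) = restr_nbrs V E v X"
      using loopfree by (auto simp: restr_nbrs_def)
    finally show "f (X(v := b)) - f (X(v := a)) = g v (restr_nbrs V E v X) b a" .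
  qed simp_all
  also have "\<dots> = measure_pmf.expectation (Pi_pmf (nbrs V E v) undefined q) (\<lambda>L. g v L b a)"
    using Pi_pmf_subset[of "V - {v}" "nbrs V E v" undefined q] V nbrs_sub
    by (simp add: P_def restr_nbrs_def)
  finally show ?thesis unfolding P_def .
qed

lemma expectation_Pi_pmf_fix_local_argmax:
  assumes G: "simple_graph V E" and lu: "local_utility_wrt V E A f g" and v: "v \<in> V"
    and A: "finite A" "\<And>u. u \<in> V \<Longrightarrow> set_pmf (q u) \<subseteq> A" "a \<in> A" "a0 \<in> A"
    and argmax: "\<And>b. b \<in> A \<Longrightarrow>
          measure_pmf.expectation (Pi_pmf (nbrs V E v) undefined q) (\<lambda>L. g v L b a0)
        \<le> measure_pmf.expectation (Pi_pmf (nbrs V E v) undefined q) (\<lambda>L. g v L a a0)"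
  shows "measure_pmf.expectation (Pi_pmf V undefined q) f
       \<le> measure_pmf.expectation (Pi_pmf V undefined (q(v := return_pmf a))) f"
proof (rule expectation_Pi_pmf_fix_argmax)
  show "finite V" using G by (simp add: simple_graph_def)
  fix b assume "b \<in> A"
  then show "measure_pmf.expectation (Pi_pmf (V - {v}) undefined q) (\<lambda>X. f (X(v := b)))
           \<le> measure_pmf.expectation (Pi_pmf (V - {v}) undefined q) (\<lambda>X. f (X(v := a)))"
    using argmax[of b] A
      local_utility_expected_gain[where q=q and b=b and a=a0, OF G lu v]
      local_utility_expected_gain[where q=q and b=a and a=a0, OF G lu v] by simp
qed (use v A in auto)

definition fix_on :: "'i set \<Rightarrow> ('i \<Rightarrow> 'a) \<Rightarrow> ('i \<Rightarrow> 'a pmf) \<Rightarrow> 'i \<Rightarrow> 'a pmf" where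
  "fix_on S x p u = (if u \<in> S then return_pmf (x u) else p u)"

context
  fixes V E c col A f g p x a0
  assumes G: "simple_graph V E" and colouring: "legal_coloring V E c col"
    and lu: "local_utility_wrt V E A f g" and A: "finite A" "a0 \<in> A"
    and p_in_A: "\<And>v. v \<in> V \<Longrightarrow> set_pmf (p v) \<subseteq> A" and x_in_A: "\<And>v. v \<in> V \<Longrightarrow> x v \<in> A"
    and greedy: "\<And>v b. v \<in> V \<Longrightarrow> b \<in> A \<Longrightarrow>
          measure_pmf.expectation (Pi_pmf (nbrs V E v) undefined (fix_on {u. col u < col v} x p))
            (\<lambda>L. g v L b a0)
        \<le> measure_pmf.expectation (Pi_pmf (nbrs V E v) undefined (fix_on {u. col u < col v} x p))
            (\<lambda>L. g v L (x v) a0)"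
begin

lemma expectation_fix_on_insert_le:
  assumes v: "v \<in> V" and S: "\<And>u. u \<in> nbrs V E v \<Longrightarrow> u \<in> S \<longleftrightarrow> col u < col v"
  shows "measure_pmf.expectation (Pi_pmf V undefined (fix_on S x p)) f
       \<le> measure_pmf.expectation (Pi_pmf V undefined (fix_on (insert v S) x p)) f"
proof -
  have "Pi_pmf (nbrs V E v) undefined (fix_on S x p)
      = Pi_pmf (nbrs V E v) undefined (fix_on {u. col u < col v} x p)"
    using S by (intro Pi_pmf_cong) (auto simp: fix_on_def)
  then have "measure_pmf.expectation (Pi_pmf V undefined (fix_on S x p)) f
      \<le> measure_pmf.expectation (Pi_pmf V undefined ((fix_on S x p)(v := return_pmf (x v)))) f"
    using G lu v A p_in_A x_in_A greedy
    by (intro expectation_Pi_pmf_fix_local_argmax) (auto simp: fix_on_def)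
  also have "(fix_on S x p)(v := return_pmf (x v)) = fix_on (insert v S) x p"
    by (auto simp: fix_on_def)
  finally show ?thesis .
qed

lemma expectation_fix_on_colour_class_le:
  assumes "finite T" "T \<subseteq> {u \<in> V. col u = t}"
  shows "measure_pmf.expectation (Pi_pmf V undefined (fix_on {u \<in> V. col u < t} x p)) f
       \<le> measure_pmf.expectation (Pi_pmf V undefined (fix_on ({u \<in> V. col u < t} \<union> T) x p)) f"
  using assms
proof (induction T rule: finite_induct)
  case (insert v T)
  have "\<And>u. u \<in> nbrs V E v \<Longrightarrow> col u \<noteq> col v"
    using colouring insert.prems unfolding legal_coloring_def nbrs_def by fastforce
  then have "measure_pmf.expectation (Pi_pmf V undefined (fix_on ({u \<in> V. col u < t} \<union> T) x p)) f
      \<le> measure_pmf.expectation (Pi_pmf V undefined (fix_on (insert v ({u \<in> V. col u < t} \<union> T)) x p)) f"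
    using insert.prems by (intro expectation_fix_on_insert_le) (auto simp: nbrs_def)
  with insert show ?case by simp
qed simp

lemma expectation_le_fix_on_colours_below:
  "measure_pmf.expectation (Pi_pmf V undefined p) f
   \<le> measure_pmf.expectation (Pi_pmf V undefined (fix_on {u \<in> V. col u < t} x p)) f"
proof (induction t)
  case 0
  then show ?case by (simp add: fix_on_def)
next
  case (Suc t)
  have "finite V" using G by (simp add: simple_graph_def)
  then have "measure_pmf.expectation (Pi_pmf V undefined (fix_on {u \<in> V. col u < t} x p)) f
      \<le> measure_pmf.expectation (Pi_pmf V undefined (fix_on {u \<in> V. col u < Suc t} x p)) f"
    using expectation_fix_on_colour_class_le[of "{u \<in> V. col u = t}" t]
    by (simp add: less_Suc_eq Collect_disj_eq Un_commute conj_disj_distribL)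
  with Suc show ?case by linarith
qed

theorem expectation_le_colour_sweep:
  "measure_pmf.expectation (Pi_pmf V undefined p) f \<le> f (\<lambda>v. if v \<in> V then x v else undefined)"
proof -
  have "Pi_pmf V undefined (fix_on {u \<in> V. col u < c} x p) = Pi_pmf V undefined (\<lambda>u. return_pmf (x u))"
    using colouring by (intro Pi_pmf_cong) (auto simp: fix_on_def legal_coloring_def)
  then show ?thesis
    using expectation_le_fix_on_colours_below[of c] G by (simp add: simple_graph_def)
qed

end

definition decode_value :: "'a local_input \<Rightarrow> bool list \<Rightarrow> 'a" where
  "decode_value inp m = inv_into (li_A inp) (li_enc inp) (tl m)"

definition received :: "'a knowledge \<Rightarrow> nat \<Rightarrow> 'a option" where
  "received K u = (if \<exists>m\<in>set (snd K). m u \<noteq> []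
     then Some (decode_value (fst K) ((SOME m. m \<in> set (snd K) \<and> m u \<noteq> []) u)) else None)"

definition nbr_dist :: "'a knowledge \<Rightarrow> (nat \<Rightarrow> 'a) pmf" where
  "nbr_dist K = Pi_pmf (li_nbrs (fst K)) undefined
     (\<lambda>u. case received K u of Some a \<Rightarrow> return_pmf a | None \<Rightarrow> li_dists (fst K) u)"

text \<open>Since \<open>g\<close> only compares two values, gains are measured against a fixed reference value.\<close>

definition expected_gain :: "'a knowledge \<Rightarrow> 'a \<Rightarrow> real" where
  "expected_gain K b = measure_pmf.expectation (nbr_dist K)
      (\<lambda>L. li_util (fst K) L b (SOME a. a \<in> li_A (fst K)))"

definition best_value :: "'a knowledge \<Rightarrow> 'a" where
  "best_value K = (SOME a. a \<in> li_A (fst K) \<and> (\<forall>b\<in>li_A (fst K). expected_gain K b \<le> expected_gain K a))"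

text \<open>
  A node of colour \<open>i\<close> decides in round \<open>i\<close> and announces its value to all neighbours;
  the leading \<open>True\<close> distinguishes an announcement from silence, as \<open>enc a\<close> may be empty.
\<close>

definition colour_sweep_alg :: "'a congest_alg" where
  "colour_sweep_alg = \<lparr> alg_send = (\<lambda>K w. if length (snd K) = li_color (fst K)
                                         then True # li_enc (fst K) (best_value K) else []),
                        alg_out = (\<lambda>K. best_value (fst K, take (li_color (fst K)) (snd K))) \<rparr>"

lemma best_value_argmax:
  assumes "finite (li_A (fst K))" "li_A (fst K) \<noteq> {}"
  shows "best_value K \<in> li_A (fst K) \<and> (\<forall>b\<in>li_A (fst K). expected_gain K b \<le> expected_gain K (best_value K))"
proof -
  have "Max (expected_gain K ` li_A (fst K)) \<in> expected_gain K ` li_A (fst K)"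
    using assms by (intro Max_in) auto
  then obtain a where "a \<in> li_A (fst K)" "expected_gain K a = Max (expected_gain K ` li_A (fst K))"
    by auto
  then have "\<exists>a. a \<in> li_A (fst K) \<and> (\<forall>b\<in>li_A (fst K). expected_gain K b \<le> expected_gain K a)"
    using assms by auto
  then show ?thesis unfolding best_value_def by (rule someI_ex)
qed

lemma run_eq_map:
  "run alg N inp r v
   = (inp v, map (\<lambda>j u. if u \<in> N v then alg_send alg (run alg N inp j u) v else []) [0..<r])"
  by (induction r arbitrary: v) auto

lemma fst_run [simp]: "fst (run alg N inp r v) = inp v"
  by (simp add: run_eq_map)

lemma length_snd_run [simp]: "length (snd (run alg N inp r v)) = r"
  by (simp add: run_eq_map)

locale coloured_instance =
  fixes V :: "nat set" and E :: "nat \<Rightarrow> nat \<Rightarrow> bool" and A :: "'a set"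
    and enc :: "'a \<Rightarrow> bool list" and c :: nat and col :: "nat \<Rightarrow> nat"
    and g :: "nat \<Rightarrow> (nat \<Rightarrow> 'a) \<Rightarrow> 'a \<Rightarrow> 'a \<Rightarrow> real" and p :: "nat \<Rightarrow> 'a pmf"
  assumes colouring: "legal_coloring V E c col"
    and finite_A: "finite A" and A_nonempty: "A \<noteq> {}" and enc: "inj_on enc A"
begin

abbreviation inp :: "nat \<Rightarrow> 'a local_input" where
  "inp \<equiv> node_input V E A enc c col g p"

abbreviation N :: "nat \<Rightarrow> nat set" where
  "N \<equiv> nbrs V E"

definition sweep_value :: "nat \<Rightarrow> 'a" where
  "sweep_value u = best_value (run colour_sweep_alg N inp (col u) u)"

lemma best_value_in_A: "best_value (run colour_sweep_alg N inp r v) \<in> A"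
  using best_value_argmax[of "run colour_sweep_alg N inp r v"] finite_A A_nonempty
  by (simp add: node_input_def)

lemma sweep_value_in_A: "sweep_value u \<in> A"
  by (simp add: sweep_value_def best_value_in_A)

lemma alg_send_colour_sweep:
  "alg_send colour_sweep_alg (run colour_sweep_alg N inp j u) w
   = (if j = col u then True # enc (sweep_value u) else [])"
  by (simp add: colour_sweep_alg_def sweep_value_def node_input_def)

lemma run_colour_sweep:
  "run colour_sweep_alg N inp r v
   = (inp v, map (\<lambda>j u. if u \<in> N v \<and> j = col u then True # enc (sweep_value u) else []) [0..<r])"
  by (subst run_eq_map) (auto simp: alg_send_colour_sweep fun_eq_iff)

lemma received_at_colour:
  assumes "u \<in> N v"
  shows "received (run colour_sweep_alg N inp (col v) v) u
       = (if col u < col v then Some (sweep_value u) else None)"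
proof -
  let ?ms = "map (\<lambda>j u. if u \<in> N v \<and> j = col u then True # enc (sweep_value u) else []) [0..<col v]"
  have sent: "(\<exists>m\<in>set ?ms. m u \<noteq> []) \<longleftrightarrow> col u < col v"
    using assms by auto
  have "(SOME m. m \<in> set ?ms \<and> m u \<noteq> []) u = True # enc (sweep_value u)" if "col u < col v"
  proof -
    have "\<exists>m. m \<in> set ?ms \<and> m u \<noteq> []" using sent that by auto
    from someI_ex[OF this] show ?thesis by (auto split: if_splits)
  qed
  moreover have "decode_value (inp v) (True # enc (sweep_value u)) = sweep_value u"
    using enc sweep_value_in_A by (simp add: decode_value_def node_input_def)
  ultimately show ?thesis
    using sent unfolding received_def run_colour_sweep by simp
qed

lemma nbr_dist_at_colour:
  "nbr_dist (run colour_sweep_alg N inp (col v) v)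
   = Pi_pmf (N v) undefined (fix_on {u. col u < col v} sweep_value p)"
  unfolding nbr_dist_def
  by (intro Pi_pmf_cong) (auto simp: received_at_colour fix_on_def node_input_def)

lemma sweep_value_greedy:
  assumes "b \<in> A"
  shows "measure_pmf.expectation (Pi_pmf (N v) undefined (fix_on {u. col u < col v} sweep_value p))
           (\<lambda>L. g v L b (SOME a. a \<in> A))
       \<le> measure_pmf.expectation (Pi_pmf (N v) undefined (fix_on {u. col u < col v} sweep_value p))
           (\<lambda>L. g v L (sweep_value v) (SOME a. a \<in> A))"
proof -
  let ?K = "run colour_sweep_alg N inp (col v) v"
  have "expected_gain ?K b'
      = measure_pmf.expectation (Pi_pmf (N v) undefined (fix_on {u. col u < col v} sweep_value p))
          (\<lambda>L. g v L b' (SOME a. a \<in> A))" for b'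
    by (simp add: expected_gain_def nbr_dist_at_colour node_input_def)
  then show ?thesis
    using best_value_argmax[of ?K] finite_A A_nonempty assms by (simp add: sweep_value_def node_input_def)
qed

lemma output_colour_sweep:
  "alg_output colour_sweep_alg V N inp c = (\<lambda>v. if v \<in> V then sweep_value v else undefined)"
proof
  fix v
  show "alg_output colour_sweep_alg V N inp c v = (if v \<in> V then sweep_value v else undefined)"
  proof (cases "v \<in> V")
    case True
    then have "col v \<le> c" using colouring by (simp add: legal_coloring_def less_imp_le)
    then have "take (col v) (snd (run colour_sweep_alg N inp c v)) = snd (run colour_sweep_alg N inp (col v) v)"
      by (simp add: run_colour_sweep take_map)
    moreover have "alg_out colour_sweep_alg K = best_value (fst K, take (col v) (snd K))" if "fst K = inp v" for K
      using that by (simp add: colour_sweep_alg_def node_input_def)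
    moreover have "(inp v, snd (run colour_sweep_alg N inp (col v) v)) = run colour_sweep_alg N inp (col v) v"
      by (simp add: prod_eq_iff)
    ultimately show ?thesis
      using True by (simp add: alg_output_def sweep_value_def)
  qed (simp add: alg_output_def)
qed

lemma congest_bounded_colour_sweep:
  assumes n: "card V \<ge> 2" and enc_len: "\<And>a. a \<in> A \<Longrightarrow> real (length (enc a)) \<le> C * log 2 (card V)"
  shows "congest_bounded (1 + \<bar>C\<bar>) R colour_sweep_alg V N inp"
  unfolding congest_bounded_def
proof (intro allI impI ballI)
  fix r v u
  have log_n: "1 \<le> log 2 (card V)" using n by simp
  have "real (length (alg_send colour_sweep_alg (run colour_sweep_alg N inp r v) u))
      \<le> 1 + real (length (enc (sweep_value v)))"
    by (simp add: alg_send_colour_sweep)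
  also have "\<dots> \<le> 1 + \<bar>C\<bar> * log 2 (card V)"
  proof -
    have "C * log 2 (card V) \<le> \<bar>C\<bar> * log 2 (card V)"
      using log_n by (intro mult_right_mono) auto
    then show ?thesis using enc_len[OF sweep_value_in_A[of v]] by linarith
  qed
  also have "\<dots> \<le> (1 + \<bar>C\<bar>) * log 2 (card V)"
    using log_n by (simp add: algebra_simps)
  finally show "real (length (alg_send colour_sweep_alg (run colour_sweep_alg N inp r v) u))
      \<le> (1 + \<bar>C\<bar>) * log 2 (card V)" .
qed

end

theorem mainTheorem6:
  fixes C :: real
  shows "\<exists>(K::nat) (B::real) (alg :: 'a congest_alg).
     \<forall>(V::nat set) E (A::'a set) (enc :: 'a \<Rightarrow> bool list) (c::nat) col
       (f :: (nat \<Rightarrow> 'a) \<Rightarrow> real) g (p :: nat \<Rightarrow> 'a pmf) (\<beta>::real).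
       simple_graph V E \<and> card V \<ge> 2 \<and>
       finite A \<and> inj_on enc A \<and>
       (\<forall>a\<in>A. real (length (enc a)) \<le> C * log 2 (real (card V))) \<and>
       legal_coloring V E c col \<and>
       local_utility_wrt V E A f g \<and>
       (\<forall>v\<in>V. set_pmf (p v) \<subseteq> A) \<and>
       measure_pmf.expectation (Pi_pmf V undefined p) f \<ge> \<beta>
       \<longrightarrow>
       (let inp = node_input V E A enc c col g p; N = nbrs V E in
          congest_bounded B (K * c) alg V N inp \<and>
          f (alg_output alg V N inp (K * c)) \<ge> \<beta>)"
  unfolding Let_def
proof (intro exI[of _ "1::nat"] exI[of _ "1 + \<bar>C\<bar>"] exI[of _ colour_sweep_alg] allI impI, elim conjE)
  fix V :: "nat set" and E :: "nat \<Rightarrow> nat \<Rightarrow> bool" and A :: "'a set"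
    and enc :: "'a \<Rightarrow> bool list" and c :: nat and col :: "nat \<Rightarrow> nat" and f :: "(nat \<Rightarrow> 'a) \<Rightarrow> real"
    and g :: "nat \<Rightarrow> (nat \<Rightarrow> 'a) \<Rightarrow> 'a \<Rightarrow> 'a \<Rightarrow> real" and p :: "nat \<Rightarrow> 'a pmf" and \<beta> :: real
  assume G: "simple_graph V E" and n: "card V \<ge> 2" and A: "finite A" and enc: "inj_on enc A"
    and enc_len: "\<forall>a\<in>A. real (length (enc a)) \<le> C * log 2 (real (card V))"
    and colouring: "legal_coloring V E c col" and lu: "local_utility_wrt V E A f g"
    and p_in_A: "\<forall>v\<in>V. set_pmf (p v) \<subseteq> A"
    and \<beta>: "\<beta> \<le> measure_pmf.expectation (Pi_pmf V undefined p) f"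
  obtain v where "v \<in> V" using n by fastforce
  then have "A \<noteq> {}" using p_in_A set_pmf_not_empty[of "p v"] by blast
  then interpret coloured_instance V E A enc c col g p
    using colouring A enc by unfold_locales
  have a0: "(SOME a. a \<in> A) \<in> A"
    using \<open>A \<noteq> {}\<close> by (simp add: some_in_eq)
  have "measure_pmf.expectation (Pi_pmf V undefined p) f
      \<le> f (\<lambda>v. if v \<in> V then sweep_value v else undefined)"
    using p_in_A sweep_value_in_A sweep_value_greedy
    by (intro expectation_le_colour_sweep[OF G colouring lu A a0]) blast+
  then show "congest_bounded (1 + \<bar>C\<bar>) (1 * c) colour_sweep_alg V N inp
      \<and> \<beta> \<le> f (alg_output colour_sweep_alg V N inp (1 * c))"
    using congest_bounded_colour_sweep[OF n] enc_len \<beta> by (simp add: output_colour_sweep)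
qed

end
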